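(* Let $U\in C^{3}(\mathbb{R}^{d})$ be a Morse function and $\boldsymbol{\ell}$ a $C^{1}$ vector field with $\nabla U\cdot\boldsymbol{\ell}\equiv0$. Let $\boldsymbol{\sigma}$ be a critical point of $U$ such that $\mathbb{H}^{\boldsymbol{\sigma}}=\nabla^{2}U(\boldsymbol{\sigma})$ has exactly one negative eigenvalue $-\lambda^{\boldsymbol{\sigma}}$, and let $-\mu^{\boldsymbol{\sigma}}$ denote the unique negative eigenvalue of $\mathbb{H}^{\boldsymbol{\sigma}}+\mathbb{L}^{\boldsymbol{\sigma}}$, where $\mathbb{L}^{\boldsymbol{\sigma}}=D\boldsymbol{\ell}(\boldsymbol{\sigma})$. Then $\mu^{\boldsymbol{\sigma}}\ge\lambda^{\boldsymbol{\sigma}}$, and consequently $\omega^{\boldsymbol{\sigma}}\ge\omega^{\boldsymbol{\sigma}}_{\mathrm{rev}}$, where $\omega^{\boldsymbol{\sigma}}=\frac{\mu^{\boldsymbol{\sigma}}}{2\pi\sqrt{-\det\mathbb{H}^{\boldsymbol{\sigma}}}}$ and $\omega^{\boldsymbol{\sigma}}_{\mathrm{rev}}=\frac{\lambda^{\boldsymbol{\sigma}}}{2\pi\sqrt{-\det\mathbb{H}^{\boldsymbol{\sigma}}}}$.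
   Context: Under these hypotheses it is known that $\mathbb{H}^{\boldsymbol{\sigma}}+\mathbb{L}^{\boldsymbol{\sigma}}$ is invertible and has exactly one negative eigenvalue, so $\mu^{\boldsymbol{\sigma}}>0$ is well defined. *)

theory Defs
  imports "HOL-Analysis.Analysis"
begin

definition real_eigenvalue :: "real^'n^'n \<Rightarrow> real \<Rightarrow> bool" where
  "real_eigenvalue A c \<longleftrightarrow> (\<exists>v. v \<noteq> 0 \<and> A *v v = c *\<^sub>R v)"

text \<open>Number of negative eigenvalues counted with multiplicity (for a symmetric matrix):
  the dimension of the span of all eigenvectors with negative eigenvalue.\<close>
definition neg_eig_count :: "real^'n^'n \<Rightarrow> nat" where
  "neg_eig_count A = dim (span {v. \<exists>c<0. A *v v = c *\<^sub>R v})"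

end

theory Submission
  imports Defs
begin

(* Differentiating gU x \<bullet> l x = 0 at the nondegenerate critical point \<sigma> gives l \<sigma> = 0 and
   (H *v h) \<bullet> (L *v h) = 0 for all h, where H = HU \<sigma> is symmetric and L = Dl \<sigma>. Since H has
   index one with negative eigenvector e, it is positive definite on the orthogonal complement of e.
   If (H + L) *v v = - \<mu> *\<^sub>R v and s = v \<bullet> (H *v v), skewness gives |H v|\<^sup>2 = - \<mu> s, while
   splitting v along e and its complement gives |H v|\<^sup>2 + \<lambda> s \<ge> 0; hence \<mu> \<ge> \<lambda>.
   The same splitting shows that the segment from the reflection in e to H consists of invertible
   matrices, so det H < 0 and the two rates compare as \<mu> and \<lambda> do. *)

lemma has_vector_derivative_along_line:
  assumes "(F has_derivative F') (at (p + s *\<^sub>R h))"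
  shows "((\<lambda>t. F (p + t *\<^sub>R h)) has_vector_derivative F' h) (at s)"
proof -
  have "((\<lambda>t. p + t *\<^sub>R h) has_derivative (\<lambda>d. d *\<^sub>R h)) (at s)"
    by (auto intro!: derivative_eq_intros)
  from has_derivative_compose[OF this assms]
  have "((\<lambda>t. F (p + t *\<^sub>R h)) has_derivative (\<lambda>d. F' (d *\<^sub>R h))) (at s)" .
  moreover have "F' (d *\<^sub>R h) = d *\<^sub>R F' h" for d
    using assms has_derivative_linear linear_scale by blast
  ultimately show ?thesis
    by (simp add: has_vector_derivative_def)
qed

lemma has_real_derivative_along_line:
  fixes F :: "'a::real_normed_vector \<Rightarrow> real"
  assumes "(F has_derivative F') (at (p + s *\<^sub>R h))"
  shows "((\<lambda>t. F (p + t *\<^sub>R h)) has_real_derivative F' h) (at s)"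
  using has_vector_derivative_along_line[OF assms]
  by (simp add: has_real_derivative_iff_has_vector_derivative)

lemma difference_quotient_tendsto:
  fixes g :: "real \<Rightarrow> 'a::real_normed_vector"
  assumes "(g has_vector_derivative g') (at 0)" and "g 0 = 0"
  shows "((\<lambda>t. g t /\<^sub>R t) \<longlongrightarrow> g') (at 0)"
proof -
  have "((\<lambda>t. norm (g t - g 0 - t *\<^sub>R g') / norm (t - 0)) \<longlongrightarrow> 0) (at 0)"
    using assms(1) unfolding has_vector_derivative_def has_derivative_iff_norm by auto
  moreover have "norm (g t - g 0 - t *\<^sub>R g') / norm (t - 0) = norm (g t /\<^sub>R t - g')"
    if "t \<noteq> 0" for t
  proof -
    have "g t /\<^sub>R t - g' = (1 / t) *\<^sub>R (g t - t *\<^sub>R g')"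
      using that by (simp add: scaleR_diff_right inverse_eq_divide)
    then show ?thesis
      using assms(2) by (simp add: divide_simps)
  qed
  then have "\<forall>\<^sub>F t in at 0. norm (g t - g 0 - t *\<^sub>R g') / norm (t - 0) = norm (g t /\<^sub>R t - g')"
    by (auto simp: eventually_at_filter)
  ultimately have "((\<lambda>t. norm (g t /\<^sub>R t - g')) \<longlongrightarrow> 0) (at 0)"
    by (rule Lim_transform_eventually)
  then show ?thesis
    by (simp add: tendsto_norm_zero_iff LIM_zero_iff)
qed

lemma tendsto_quotient_along_line:
  assumes "(F has_derivative F') (at p)" and "F p = 0"
  shows "((\<lambda>t. F (p + t *\<^sub>R h) /\<^sub>R t) \<longlongrightarrow> F' h) (at 0)"
  using difference_quotient_tendsto[of "\<lambda>t. F (p + t *\<^sub>R h)"]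
    has_vector_derivative_along_line[of F F' p 0 h] assms by simp

lemma orthogonal_field_vanishes_at_critical_point:
  fixes g l :: "real^'n \<Rightarrow> real^'n" and H :: "real^'n^'n"
  assumes g_deriv: "(g has_derivative (\<lambda>h. H *v h)) (at \<sigma>)" and "g \<sigma> = 0"
    and "continuous (at \<sigma>) l"
    and orth: "\<And>x. g x \<bullet> l x = 0"
    and H_sym: "\<And>h k. (H *v k) \<bullet> h = (H *v h) \<bullet> k"
    and H_inj: "\<And>x. H *v x = 0 \<Longrightarrow> x = 0"
  shows "l \<sigma> = 0"
proof -
  have "((\<lambda>t. (g (\<sigma> + t *\<^sub>R h) /\<^sub>R t) \<bullet> l (\<sigma> + t *\<^sub>R h)) \<longlongrightarrow> (H *v h) \<bullet> l \<sigma>) (at 0)" for h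
  proof (intro tendsto_inner tendsto_quotient_along_line[OF g_deriv \<open>g \<sigma> = 0\<close>])
    have "((\<lambda>t. \<sigma> + t *\<^sub>R h) \<longlongrightarrow> \<sigma>) (at 0)"
      by (auto intro!: tendsto_eq_intros)
    then show "((\<lambda>t. l (\<sigma> + t *\<^sub>R h)) \<longlongrightarrow> l \<sigma>) (at 0)"
      using isCont_tendsto_compose[OF \<open>continuous (at \<sigma>) l\<close>] by blast
  qed
  then have "(H *v h) \<bullet> l \<sigma> = 0" for h
    by (simp add: orth tendsto_const_iff)
  then have "(H *v l \<sigma>) \<bullet> (H *v l \<sigma>) = 0"
    using H_sym by metis
  then show ?thesis
    using H_inj by simp
qed

lemma hessian_orthogonal_to_field_derivative:
  fixes g l :: "real^'n \<Rightarrow> real^'n" and H L :: "real^'n^'n"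
  assumes g_deriv: "(g has_derivative (\<lambda>h. H *v h)) (at \<sigma>)" and "g \<sigma> = 0"
    and l_deriv: "(l has_derivative (\<lambda>h. L *v h)) (at \<sigma>)" and "l \<sigma> = 0"
    and orth: "\<And>x. g x \<bullet> l x = 0"
  shows "(H *v h) \<bullet> (L *v h) = 0"
proof -
  have "((\<lambda>t. (g (\<sigma> + t *\<^sub>R h) /\<^sub>R t) \<bullet> (l (\<sigma> + t *\<^sub>R h) /\<^sub>R t)) \<longlongrightarrow> (H *v h) \<bullet> (L *v h)) (at 0)"
    by (intro tendsto_inner tendsto_quotient_along_line assms)
  then show ?thesis
    by (simp add: orth tendsto_const_iff)
qed

lemma second_difference_mean_value:
  fixes U :: "real^'n \<Rightarrow> real" and gU :: "real^'n \<Rightarrow> real^'n" and HU :: "real^'n \<Rightarrow> real^'n^'n"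
  assumes U_grad: "\<And>x. (U has_derivative (\<lambda>h. gU x \<bullet> h)) (at x)"
    and U_hess: "\<And>x. (gU has_derivative (\<lambda>h. HU x *v h)) (at x)"
    and "t > 0"
  obtains y where "norm (y - x) \<le> t * (norm h + norm k)"
    and "U (x + t *\<^sub>R h + t *\<^sub>R k) - U (x + t *\<^sub>R h) - U (x + t *\<^sub>R k) + U x
           = t\<^sup>2 * ((HU y *v k) \<bullet> h)"
proof -
  define \<phi> where "\<phi> s = U (x + t *\<^sub>R k + s *\<^sub>R h) - U (x + s *\<^sub>R h)" for s
  have "(\<phi> has_real_derivative gU (x + t *\<^sub>R k + s *\<^sub>R h) \<bullet> h - gU (x + s *\<^sub>R h) \<bullet> h) (at s)" for s
    unfolding \<phi>_def by (intro DERIV_diff has_real_derivative_along_line U_grad)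
  then obtain s where s: "0 < s" "s < t"
    and \<phi>: "\<phi> t - \<phi> 0 = t * (gU (x + t *\<^sub>R k + s *\<^sub>R h) \<bullet> h - gU (x + s *\<^sub>R h) \<bullet> h)"
    using MVT2[OF \<open>t > 0\<close>, of \<phi> "\<lambda>s. gU (x + t *\<^sub>R k + s *\<^sub>R h) \<bullet> h - gU (x + s *\<^sub>R h) \<bullet> h"]
    by auto
  define \<psi> where "\<psi> r = gU (x + s *\<^sub>R h + r *\<^sub>R k) \<bullet> h" for r
  have "(\<psi> has_real_derivative (HU (x + s *\<^sub>R h + r *\<^sub>R k) *v k) \<bullet> h) (at r)" for r
    unfolding \<psi>_def by (intro has_real_derivative_along_line has_derivative_inner_left U_hess)
  then obtain r where r: "0 < r" "r < t"
    and \<psi>: "\<psi> t - \<psi> 0 = t * ((HU (x + s *\<^sub>R h + r *\<^sub>R k) *v k) \<bullet> h)"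
    using MVT2[OF \<open>t > 0\<close>, of \<psi> "\<lambda>r. (HU (x + s *\<^sub>R h + r *\<^sub>R k) *v k) \<bullet> h"]
    by auto
  show ?thesis
  proof
    have "norm (s *\<^sub>R h + r *\<^sub>R k) \<le> s * norm h + r * norm k"
      using s r by (metis abs_of_pos norm_scaleR norm_triangle_ineq)
    also have "\<dots> \<le> t * (norm h + norm k)"
      using s r by (simp add: distrib_left add_mono mult_right_mono)
    finally show "norm (x + s *\<^sub>R h + r *\<^sub>R k - x) \<le> t * (norm h + norm k)"
      by (simp add: add.assoc)
    have "\<psi> t - \<psi> 0 = gU (x + t *\<^sub>R k + s *\<^sub>R h) \<bullet> h - gU (x + s *\<^sub>R h) \<bullet> h"
      unfolding \<psi>_def by (simp add: add_ac)
    with \<phi> \<psi> have "\<phi> t - \<phi> 0 = t\<^sup>2 * ((HU (x + s *\<^sub>R h + r *\<^sub>R k) *v k) \<bullet> h)"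
      by (simp add: power2_eq_square)
    then show "U (x + t *\<^sub>R h + t *\<^sub>R k) - U (x + t *\<^sub>R h) - U (x + t *\<^sub>R k) + U x
           = t\<^sup>2 * ((HU (x + s *\<^sub>R h + r *\<^sub>R k) *v k) \<bullet> h)"
      unfolding \<phi>_def by (simp add: add_ac)
  qed
qed

lemma eq_of_continuous_at_and_near_coincidences:
  fixes F G :: "'a::metric_space \<Rightarrow> 'b::metric_space"
  assumes "continuous (at x) F" and "continuous (at x) G"
    and "\<And>d. d > 0 \<Longrightarrow> \<exists>y z. dist y x < d \<and> dist z x < d \<and> F y = G z"
  shows "F x = G x"
proof (rule ccontr)
  assume "F x \<noteq> G x"
  define e where "e = dist (F x) (G x) / 2"
  have "e > 0"
    using \<open>F x \<noteq> G x\<close> by (simp add: e_def)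
  obtain d1 where "d1 > 0" and d1: "\<And>y. dist y x < d1 \<Longrightarrow> dist (F y) (F x) < e"
    using assms(1) \<open>e > 0\<close> unfolding continuous_at_eps_delta by blast
  obtain d2 where "d2 > 0" and d2: "\<And>z. dist z x < d2 \<Longrightarrow> dist (G z) (G x) < e"
    using assms(2) \<open>e > 0\<close> unfolding continuous_at_eps_delta by blast
  obtain y z where yz: "dist y x < min d1 d2" "dist z x < min d1 d2" and "F y = G z"
    using assms(3)[of "min d1 d2"] \<open>d1 > 0\<close> \<open>d2 > 0\<close> by auto
  have "dist (F x) (G x) \<le> dist (F y) (F x) + dist (G z) (G x)"
    using dist_triangle3[of "F x" "G x" "F y"] \<open>F y = G z\<close> by simp
  also have "\<dots> < 2 * e"
    using d1[of y] d2[of z] yz by simp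
  finally have "dist (F x) (G x) < 2 * e" .
  then show False
    by (simp add: e_def)
qed

lemma continuous_bilinear_form:
  fixes M :: "'a::t2_space \<Rightarrow> real^'n^'m"
  assumes "continuous F M"
  shows "continuous F (\<lambda>y. (M y *v k) \<bullet> h)"
  unfolding matrix_vector_mult_def inner_vec_def
  by (simp, intro continuous_intros continuous_component assms)

lemma hessian_symmetric:
  fixes U :: "real^'n \<Rightarrow> real" and gU :: "real^'n \<Rightarrow> real^'n" and HU :: "real^'n \<Rightarrow> real^'n^'n"
  assumes U_grad: "\<And>x. (U has_derivative (\<lambda>h. gU x \<bullet> h)) (at x)"
    and U_hess: "\<And>x. (gU has_derivative (\<lambda>h. HU x *v h)) (at x)"
    and "continuous (at x) HU"
  shows "(HU x *v k) \<bullet> h = (HU x *v h) \<bullet> k"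
proof (rule eq_of_continuous_at_and_near_coincidences
    [where F = "\<lambda>y. (HU y *v k) \<bullet> h" and G = "\<lambda>y. (HU y *v h) \<bullet> k"])
  show "continuous (at x) (\<lambda>y. (HU y *v k) \<bullet> h)" "continuous (at x) (\<lambda>y. (HU y *v h) \<bullet> k)"
    using assms(3) by (simp_all add: continuous_bilinear_form)
  fix d :: real
  assume "d > 0"
  define t where "t = d / (2 * (norm h + norm k + 1))"
  have "norm h + norm k + 1 > 0"
    using norm_ge_zero[of h] norm_ge_zero[of k] by linarith
  then have "t > 0"
    using \<open>d > 0\<close> by (simp add: t_def)
  have "t * (norm h + norm k) < d"
  proof -
    have "t * (norm h + norm k) \<le> t * (norm h + norm k + 1)"
      using \<open>t > 0\<close> by simp
    also have "\<dots> = d / 2"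
      unfolding t_def using \<open>norm h + norm k + 1 > 0\<close> by (simp add: field_simps)
    finally show ?thesis
      using \<open>d > 0\<close> by simp
  qed
  obtain y where y: "norm (y - x) \<le> t * (norm h + norm k)"
    "U (x + t *\<^sub>R h + t *\<^sub>R k) - U (x + t *\<^sub>R h) - U (x + t *\<^sub>R k) + U x = t\<^sup>2 * ((HU y *v k) \<bullet> h)"
    using second_difference_mean_value[OF U_grad U_hess \<open>t > 0\<close>] by blast
  obtain z where z: "norm (z - x) \<le> t * (norm k + norm h)"
    "U (x + t *\<^sub>R k + t *\<^sub>R h) - U (x + t *\<^sub>R k) - U (x + t *\<^sub>R h) + U x = t\<^sup>2 * ((HU z *v h) \<bullet> k)"
    using second_difference_mean_value[OF U_grad U_hess \<open>t > 0\<close>] by blast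
  have "U (x + t *\<^sub>R k + t *\<^sub>R h) = U (x + t *\<^sub>R h + t *\<^sub>R k)"
    by (simp add: add_ac)
  then have "t\<^sup>2 * ((HU y *v k) \<bullet> h) = t\<^sup>2 * ((HU z *v h) \<bullet> k)"
    using y(2) z(2) by linarith
  then have "(HU y *v k) \<bullet> h = (HU z *v h) \<bullet> k"
    using \<open>t > 0\<close> by simp
  moreover have "dist y x < d" "dist z x < d"
    using y(1) z(1) \<open>t * (norm h + norm k) < d\<close> by (simp_all add: dist_norm add.commute)
  ultimately show "\<exists>y z. dist y x < d \<and> dist z x < d \<and> (HU y *v k) \<bullet> h = (HU z *v h) \<bullet> k"
    by blast
qed

lemma linear_coeff_zero_if_quadratic_nonneg:
  fixes a b :: real
  assumes "\<And>s. a * s + b * s\<^sup>2 \<ge> 0"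
  shows "a = 0"
proof (rule ccontr)
  assume "a \<noteq> 0"
  define c where "c = \<bar>b\<bar> + 1"
  have "c > 0" "b < c"
    by (simp_all add: c_def)
  have "a * (- a / c) + b * (- a / c)\<^sup>2 = a\<^sup>2 * (b - c) / c\<^sup>2"
    using \<open>c > 0\<close> by (simp add: field_simps power2_eq_square)
  also have "\<dots> < 0"
    using \<open>a \<noteq> 0\<close> \<open>c > 0\<close> \<open>b < c\<close> by (intro divide_neg_pos mult_pos_neg) auto
  finally show False
    using assms[of "- a / c"] by simp
qed

lemma quadratic_form_attains_min_on_orthogonal_complement:
  fixes H :: "real^'n^'n"
  assumes "u \<bullet> e = 0" and "u \<noteq> 0"
  obtains x where "x \<bullet> e = 0" and "norm x = 1"
    and "\<And>y. y \<bullet> e = 0 \<Longrightarrow> (x \<bullet> (H *v x)) * (y \<bullet> y) \<le> y \<bullet> (H *v y)"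
proof -
  define S where "S = sphere 0 1 \<inter> {x. e \<bullet> x = 0}"
  have "compact S"
    unfolding S_def by (intro compact_Int_closed compact_sphere closed_hyperplane)
  moreover have "u /\<^sub>R norm u \<in> S"
    using assms by (simp add: S_def inner_commute)
  moreover have "continuous_on S (\<lambda>x. x \<bullet> (H *v x))"
    by (intro continuous_on_inner continuous_on_id matrix_vector_mult_linear_continuous_on[unfolded eta_contract_eq])
  ultimately obtain x where "x \<in> S" and x_min: "\<And>z. z \<in> S \<Longrightarrow> x \<bullet> (H *v x) \<le> z \<bullet> (H *v z)"
    by (metis continuous_attains_inf empty_iff)
  show ?thesis
  proof
    show "x \<bullet> e = 0" "norm x = 1"
      using \<open>x \<in> S\<close> by (simp_all add: S_def inner_commute)
    show "(x \<bullet> (H *v x)) * (y \<bullet> y) \<le> y \<bullet> (H *v y)" if "y \<bullet> e = 0" for y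
    proof (cases "y = 0")
      case False
      then have "y /\<^sub>R norm y \<in> S"
        using that by (simp add: S_def inner_commute)
      then have "x \<bullet> (H *v x) \<le> (y /\<^sub>R norm y) \<bullet> (H *v (y /\<^sub>R norm y))"
        by (rule x_min)
      also have "\<dots> = (y \<bullet> (H *v y)) / (norm y)\<^sup>2"
        by (simp add: matrix_vector_mult_scaleR power2_eq_square divide_inverse mult_ac)
      finally show ?thesis
        using False by (simp add: field_simps dot_square_norm)
    qed simp
  qed
qed

lemma constrained_minimizer_is_eigenvector:
  fixes H :: "real^'n^'n"
  assumes H_sym: "\<And>h k. (H *v k) \<bullet> h = (H *v h) \<bullet> k"
    and "H *v e = c *\<^sub>R e"
    and "x \<bullet> e = 0" and "norm x = 1"
    and x_min: "\<And>y. y \<bullet> e = 0 \<Longrightarrow> (x \<bullet> (H *v x)) * (y \<bullet> y) \<le> y \<bullet> (H *v y)"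
  shows "H *v x = (x \<bullet> (H *v x)) *\<^sub>R x"
proof -
  define m where "m = x \<bullet> (H *v x)"
  define r where "r = H *v x - m *\<^sub>R x"
  have "x \<bullet> x = 1"
    using \<open>norm x = 1\<close> by (simp add: dot_square_norm)
  have "r \<bullet> e = 0"
    using H_sym[of e x] assms(2,3) by (simp add: r_def inner_diff_left inner_diff_right inner_commute)
  have "r \<bullet> (H *v x) - m * (x \<bullet> r) = r \<bullet> r"
    by (simp add: r_def inner_diff_left inner_diff_right inner_commute algebra_simps)
  \<comment> \<open>minimality along the line through x in direction r, which stays orthogonal to e\<close>
  have "2 * (r \<bullet> r) * s + (r \<bullet> (H *v r) - m * (r \<bullet> r)) * s\<^sup>2 \<ge> 0" for s
  proof -
    have "x \<bullet> (H *v r) = r \<bullet> (H *v x)"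
      using H_sym[of x r] by (simp add: inner_commute)
    then have "(x + s *\<^sub>R r) \<bullet> (H *v (x + s *\<^sub>R r)) = m + 2 * s * (r \<bullet> (H *v x)) + s\<^sup>2 * (r \<bullet> (H *v r))"
      unfolding m_def
      by (simp add: matrix_vector_right_distrib matrix_vector_mult_scaleR inner_add_left inner_add_right
          power2_eq_square algebra_simps)
    moreover have "(x + s *\<^sub>R r) \<bullet> (x + s *\<^sub>R r) = 1 + 2 * s * (x \<bullet> r) + s\<^sup>2 * (r \<bullet> r)"
      using \<open>x \<bullet> x = 1\<close>
      by (simp add: inner_add_left inner_add_right inner_commute power2_eq_square algebra_simps)
    moreover have "m * ((x + s *\<^sub>R r) \<bullet> (x + s *\<^sub>R r)) \<le> (x + s *\<^sub>R r) \<bullet> (H *v (x + s *\<^sub>R r))"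
      using x_min[of "x + s *\<^sub>R r"] \<open>x \<bullet> e = 0\<close> \<open>r \<bullet> e = 0\<close> by (simp add: m_def inner_add_left)
    ultimately show ?thesis
      using \<open>r \<bullet> (H *v x) - m * (x \<bullet> r) = r \<bullet> r\<close> by (simp add: algebra_simps)
  qed
  then have "2 * (r \<bullet> r) = 0"
    by (rule linear_coeff_zero_if_quadratic_nonneg)
  then show ?thesis
    by (simp add: r_def m_def)
qed

lemma two_le_neg_eig_count:
  fixes H :: "real^'n^'n"
  assumes "H *v e = a *\<^sub>R e" "a < 0" "e \<noteq> 0"
    and "H *v x = b *\<^sub>R x" "b < 0" "x \<noteq> 0"
    and "x \<bullet> e = 0"
  shows "2 \<le> neg_eig_count H"
proof -
  have "{e, x} \<subseteq> {v. \<exists>c<0. H *v v = c *\<^sub>R v}"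
    using assms(1,2,4,5) by blast
  then have span: "{e, x} \<subseteq> span {v. \<exists>c<0. H *v v = c *\<^sub>R v}"
    using span_superset by blast
  have indep: "independent {e, x}"
  proof (rule pairwise_orthogonal_independent)
    show "pairwise orthogonal {e, x}"
      using assms(7) by (simp add: pairwise_insert orthogonal_def inner_commute)
    show "0 \<notin> {e, x}"
      using assms(3,6) by simp
  qed
  have "card {e, x} = 2"
    using assms(6,7) by (cases "e = x") auto
  then show ?thesis
    using independent_card_le_dim[OF span indep] by (simp add: neg_eig_count_def)
qed

lemma index_one_pos_def_on_orthogonal_complement:
  fixes H :: "real^'n^'n"
  assumes H_sym: "\<And>h k. (H *v k) \<bullet> h = (H *v h) \<bullet> k"
    and H_inj: "\<And>x. H *v x = 0 \<Longrightarrow> x = 0"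
    and "neg_eig_count H = 1"
    and "H *v e = (- lam) *\<^sub>R e" "lam > 0" "e \<noteq> 0"
    and "u \<bullet> e = 0" "u \<noteq> 0"
  shows "u \<bullet> (H *v u) > 0"
proof -
  obtain x where x: "x \<bullet> e = 0" "norm x = 1"
    and x_min: "\<And>y. y \<bullet> e = 0 \<Longrightarrow> (x \<bullet> (H *v x)) * (y \<bullet> y) \<le> y \<bullet> (H *v y)"
    using quadratic_form_attains_min_on_orthogonal_complement[OF assms(7,8)] by metis
  define m where "m = x \<bullet> (H *v x)"
  have Hx: "H *v x = m *\<^sub>R x"
    unfolding m_def using constrained_minimizer_is_eigenvector[OF H_sym assms(4) x x_min] .
  have "m \<noteq> 0"
    using Hx H_inj x(2) by fastforce
  moreover have "\<not> m < 0"
    using two_le_neg_eig_count[OF assms(4) _ assms(6) Hx _ _ x(1)] x(2) assms(3,5) by fastforce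
  ultimately have "m * (u \<bullet> u) > 0"
    using assms(8) by simp
  then show ?thesis
    using x_min[OF assms(7)] unfolding m_def by linarith
qed

lemma continuous_on_det:
  fixes A :: "'a::topological_space \<Rightarrow> real^'n^'n"
  assumes "continuous_on S A"
  shows "continuous_on S (\<lambda>t. det (A t))"
  unfolding det_def by (intro continuous_intros assms)

lemma det_neq_0_if_injective:
  fixes A :: "real^'n^'n"
  assumes "\<And>x. A *v x = 0 \<Longrightarrow> x = 0"
  shows "det A \<noteq> 0"
  using assms by (simp add: invertible_det_nz[symmetric] invertible_left_inverse matrix_left_invertible_ker)

lemma det_neg_along_injective_path:
  fixes A :: "real \<Rightarrow> real^'n^'n"
  assumes "continuous_on {0..1} A"
    and "\<And>t x. t \<in> {0..1} \<Longrightarrow> A t *v x = 0 \<Longrightarrow> x = 0"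
    and "det (A 0) < 0"
  shows "det (A 1) < 0"
proof (rule ccontr)
  assume "\<not> det (A 1) < 0"
  then obtain t where "t \<in> {0..1}" "det (A t) = 0"
    using IVT'[of "\<lambda>t. det (A t)" 0 0 1] continuous_on_det[OF assms(1)] assms(3) by auto
  then show False
    using det_neq_0_if_injective assms(2) by metis
qed

lemma reflection_matrix_exists:
  fixes u :: "real^'n"
  assumes "norm u = 1"
  obtains R where "det R = -1" and "\<And>x. R *v x = x - (2 * (u \<bullet> x)) *\<^sub>R u"
proof -
  fix k :: 'n
  obtain Q where Q: "orthogonal_matrix Q" "Q *v axis k 1 = u"
    using orthogonal_matrix_exists_basis assms by metis
  define D :: "real^'n^'n" where "D = (\<chi> i j. if i = j then (if i = k then -1 else 1) else 0)"
  have "(D *v y) $ i = (if i = k then -1 else 1) * y $ i" for y i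
    by (simp add: D_def matrix_vector_mult_def if_distrib[of "\<lambda>a. a * _"] sum.delta cong: if_cong)
  then have D_apply: "D *v y = y - (2 * y $ k) *\<^sub>R axis k 1" for y
    by (simp add: vec_eq_iff axis_def)
  have "det D = -1"
    by (simp add: D_def det_diagonal prod.delta)
  show ?thesis
  proof
    have "det Q * det Q = 1"
      using det_orthogonal_matrix[OF Q(1)] by auto
    then show "det (Q ** D ** transpose Q) = -1"
      using \<open>det D = -1\<close> by (simp add: det_mul)
    fix x
    have "(transpose Q *v x) $ k = x \<bullet> (Q *v axis k 1)"
      by (simp add: cart_eq_inner_axis dot_lmul_matrix)
    then have "(transpose Q *v x) $ k = u \<bullet> x"
      by (simp add: Q(2) inner_commute)
    moreover have "Q *v (transpose Q *v x) = x"
      using Q(1) by (metis matrix_vector_mul_assoc matrix_vector_mul_lid orthogonal_matrix_def)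
    ultimately show "(Q ** D ** transpose Q) *v x = x - (2 * (u \<bullet> x)) *\<^sub>R u"
      by (simp add: matrix_vector_mul_assoc[symmetric] D_apply matrix_vector_right_distrib
          matrix_vector_mult_diff_distrib matrix_vector_mult_scaleR Q(2))
  qed
qed

lemma det_neg_if_single_neg_direction:
  fixes H :: "real^'n^'n"
  assumes H_sym: "\<And>h k. (H *v k) \<bullet> h = (H *v h) \<bullet> k"
    and "H *v e = (- lam) *\<^sub>R e" "lam > 0" "e \<noteq> 0"
    and H_pos: "\<And>u. u \<bullet> e = 0 \<Longrightarrow> u \<noteq> 0 \<Longrightarrow> u \<bullet> (H *v u) > 0"
  shows "det H < 0"
proof -
  obtain R where "det R = -1" and R: "\<And>x. R *v x = x - (2 * ((e /\<^sub>R norm e) \<bullet> x)) *\<^sub>R (e /\<^sub>R norm e)"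
    using reflection_matrix_exists[of "e /\<^sub>R norm e"] \<open>e \<noteq> 0\<close> by auto
  have R_e: "e \<bullet> (R *v x) = - (e \<bullet> x)" for x
    unfolding R using \<open>e \<noteq> 0\<close> by (simp add: inner_diff_right dot_square_norm field_simps power2_eq_square)
  have R_perp: "R *v x = x" if "x \<bullet> e = 0" for x
    using R[of x] that by (simp add: inner_commute)
  define A where "A t = (1 - t) *\<^sub>R R + t *\<^sub>R H" for t :: real
  have "det (A 1) < 0"
  proof (rule det_neg_along_injective_path)
    show "continuous_on {0..1} A"
      unfolding A_def by (intro continuous_intros)
    show "det (A 0) < 0"
      using \<open>det R = -1\<close> by (simp add: A_def)
    fix t x
    assume "t \<in> {0..1}" and "A t *v x = 0"
    have A_apply: "A t *v x = (1 - t) *\<^sub>R (R *v x) + t *\<^sub>R (H *v x)"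
      by (simp add: A_def matrix_vector_mult_add_rdistrib scaleR_matrix_vector_assoc)
    have "e \<bullet> (H *v x) = - lam * (e \<bullet> x)"
      using H_sym[of e x] assms(2) by (simp add: inner_commute)
    then have "e \<bullet> (A t *v x) = - ((1 - t) + t * lam) * (e \<bullet> x)"
      by (simp add: A_apply inner_add_right R_e algebra_simps)
    moreover have "(1 - t) + t * lam > 0"
      using \<open>t \<in> {0..1}\<close> \<open>lam > 0\<close> by (cases "t = 0") (auto simp: add_nonneg_pos)
    ultimately have "x \<bullet> e = 0"
      using \<open>A t *v x = 0\<close> by (simp add: inner_commute)
    show "x = 0"
    proof (rule ccontr)
      assume "x \<noteq> 0"
      have "(A t *v x) \<bullet> x = (1 - t) * (x \<bullet> x) + t * (x \<bullet> (H *v x))"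
        by (simp add: A_apply R_perp[OF \<open>x \<bullet> e = 0\<close>] inner_add_left inner_add_right inner_commute)
      moreover have "(1 - t) * (x \<bullet> x) + t * (x \<bullet> (H *v x)) > 0"
        using \<open>t \<in> {0..1}\<close> \<open>x \<noteq> 0\<close> H_pos[OF \<open>x \<bullet> e = 0\<close> \<open>x \<noteq> 0\<close>]
        by (cases "t = 0") (auto intro: add_nonneg_pos)
      ultimately show False
        using \<open>A t *v x = 0\<close> by simp
    qed
  qed
  then show ?thesis
    by (simp add: A_def)
qed

lemma neg_eigenvalue_of_skew_perturbation_le:
  fixes H L :: "real^'n^'n"
  assumes H_sym: "\<And>h k. (H *v k) \<bullet> h = (H *v h) \<bullet> k"
    and H_inj: "\<And>x. H *v x = 0 \<Longrightarrow> x = 0"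
    and "H *v e = (- lam) *\<^sub>R e" "lam > 0" "e \<noteq> 0"
    and H_pos: "\<And>u. u \<bullet> e = 0 \<Longrightarrow> u \<noteq> 0 \<Longrightarrow> u \<bullet> (H *v u) > 0"
    and skew: "\<And>h. (H *v h) \<bullet> (L *v h) = 0"
    and "(H + L) *v v = (- \<mu>) *\<^sub>R v" "v \<noteq> 0" "\<mu> > 0"
  shows "lam \<le> \<mu>"
proof -
  define s where "s = v \<bullet> (H *v v)"
  define P where "P = (H *v v) \<bullet> (H *v v)"
  have "P = (H *v v) \<bullet> ((H + L) *v v)"
    by (simp add: P_def matrix_vector_mult_add_rdistrib inner_add_right skew)
  then have "P = - \<mu> * s"
    using assms(8) by (simp add: s_def inner_commute)
  moreover have "P > 0"
    using H_inj \<open>v \<noteq> 0\<close> by (auto simp: P_def)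
  moreover have "P + lam * s \<ge> 0"
  proof -
    define a where "a = (v \<bullet> e) / (e \<bullet> e)"
    define u where "u = v - a *\<^sub>R e"
    have "u \<bullet> e = 0"
      using \<open>e \<noteq> 0\<close> by (simp add: u_def a_def inner_diff_left)
    have "(H *v u) \<bullet> e = 0"
      using H_sym[of e u] assms(3) \<open>u \<bullet> e = 0\<close> by (simp add: inner_commute)
    have v: "v = a *\<^sub>R e + u" and Hv: "H *v v = (- lam * a) *\<^sub>R e + H *v u"
      by (simp_all add: u_def matrix_vector_mult_diff_distrib matrix_vector_mult_scaleR assms(3))
    have P_eq: "P = (lam * a)\<^sup>2 * (e \<bullet> e) + (H *v u) \<bullet> (H *v u)"
      using \<open>(H *v u) \<bullet> e = 0\<close> unfolding P_def Hv
      by (simp add: inner_diff_left inner_diff_right inner_commute power2_eq_square)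
    have s_eq: "s = - lam * a\<^sup>2 * (e \<bullet> e) + u \<bullet> (H *v u)"
      using \<open>u \<bullet> e = 0\<close> \<open>(H *v u) \<bullet> e = 0\<close> unfolding s_def Hv unfolding v
      by (simp add: inner_add_right inner_diff_right inner_commute power2_eq_square)
    have "P + lam * s = (H *v u) \<bullet> (H *v u) + lam * (u \<bullet> (H *v u))"
      unfolding P_eq s_eq by (simp add: algebra_simps power2_eq_square)
    moreover have "u \<bullet> (H *v u) \<ge> 0"
      using H_pos[OF \<open>u \<bullet> e = 0\<close>] by (cases "u = 0") auto
    ultimately show ?thesis
      using \<open>lam > 0\<close> by simp
  qed
  ultimately have "(lam - \<mu>) * s \<ge> 0" and "\<mu> * s < 0"
    by (simp_all add: algebra_simps)
  moreover have "s < 0"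
    using \<open>\<mu> * s < 0\<close> \<open>\<mu> > 0\<close> by (simp add: mult_less_0_iff)
  ultimately show ?thesis
    by (simp add: zero_le_mult_iff)
qed

theorem lemma3p4:
  fixes U :: "real^'n \<Rightarrow> real"
    and gU :: "real^'n \<Rightarrow> real^'n"
    and HU :: "real^'n \<Rightarrow> real^'n^'n"
    and D3U :: "real^'n \<Rightarrow> real^'n \<Rightarrow> real^'n^'n"
    and l :: "real^'n \<Rightarrow> real^'n"
    and Dl :: "real^'n \<Rightarrow> real^'n^'n"
    and \<sigma> :: "real^'n"
    and lam \<mu> :: real
  assumes U_grad: "\<And>x. (U has_derivative (\<lambda>h. gU x \<bullet> h)) (at x)"
    and U_hess: "\<And>x. (gU has_derivative (\<lambda>h. HU x *v h)) (at x)"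
    and U_third: "\<And>x. (HU has_derivative D3U x) (at x)"
    and U_C3: "\<And>h. continuous_on UNIV (\<lambda>x. D3U x h)"
    and Morse: "\<And>x. gU x = 0 \<Longrightarrow> invertible (HU x)"
    and l_deriv: "\<And>x. (l has_derivative (\<lambda>h. Dl x *v h)) (at x)"
    and l_C1: "continuous_on UNIV Dl"
    and orth: "\<And>x. gU x \<bullet> l x = 0"
    and crit: "gU \<sigma> = 0"
    and index1: "neg_eig_count (HU \<sigma>) = 1"
    and lam_pos: "lam > 0"
    and lam_eig: "real_eigenvalue (HU \<sigma>) (- lam)"
    and mu_pos: "\<mu> > 0"
    and mu_eig: "real_eigenvalue (HU \<sigma> + Dl \<sigma>) (- \<mu>)"
    and mu_unique: "\<And>c. c < 0 \<Longrightarrow> real_eigenvalue (HU \<sigma> + Dl \<sigma>) c \<Longrightarrow> c = - \<mu>"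
  shows "\<mu> \<ge> lam \<and>
    \<mu> / (2 * pi * sqrt (- det (HU \<sigma>))) \<ge> lam / (2 * pi * sqrt (- det (HU \<sigma>)))"
proof -
  have H_inj: "\<And>x. HU \<sigma> *v x = 0 \<Longrightarrow> x = 0"
    using Morse[OF crit] by (simp add: invertible_left_inverse matrix_left_invertible_ker)
  have H_sym: "\<And>h k. (HU \<sigma> *v k) \<bullet> h = (HU \<sigma> *v h) \<bullet> k"
    using hessian_symmetric[OF U_grad U_hess] U_third has_derivative_continuous by blast
  have "l \<sigma> = 0"
    using orthogonal_field_vanishes_at_critical_point[OF U_hess crit _ orth H_sym H_inj]
      l_deriv has_derivative_continuous by blast
  then have skew: "\<And>h. (HU \<sigma> *v h) \<bullet> (Dl \<sigma> *v h) = 0"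
    using hessian_orthogonal_to_field_derivative[OF U_hess crit l_deriv _ orth] by blast
  obtain e where e: "HU \<sigma> *v e = (- lam) *\<^sub>R e" "e \<noteq> 0"
    using lam_eig unfolding real_eigenvalue_def by blast
  have H_pos: "\<And>u. u \<bullet> e = 0 \<Longrightarrow> u \<noteq> 0 \<Longrightarrow> u \<bullet> (HU \<sigma> *v u) > 0"
    using index_one_pos_def_on_orthogonal_complement[OF H_sym H_inj index1 e(1) lam_pos e(2)] by blast
  obtain v where v: "(HU \<sigma> + Dl \<sigma>) *v v = (- \<mu>) *\<^sub>R v" "v \<noteq> 0"
    using mu_eig unfolding real_eigenvalue_def by blast
  have "lam \<le> \<mu>"
    by (rule neg_eigenvalue_of_skew_perturbation_le[OF H_sym H_inj e(1) lam_pos e(2) H_pos skew v mu_pos])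
  moreover have "det (HU \<sigma>) < 0"
    by (rule det_neg_if_single_neg_direction[OF H_sym e(1) lam_pos e(2) H_pos])
  ultimately show ?thesis
    by (simp add: divide_right_mono)
qed

end
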